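(* Let $(a_n)_{n\ge1}$ be an Euler–Gauss sequence such that $\gcd(a_n,n)=1$ for all $n\ge1$. Then $(a_n)$ is a Gauss sequence.
   Context: $\mu$ is the Möbius function. For an integer sequence $(a_n)$ and $n\ge1$, $A_n^+=\prod_{d\mid n,\ \mu(d)=1} a_{n/d}$ and $A_n^-=\prod_{d\mid n,\ \mu(d)=-1} a_{n/d}$ (empty products equal $1$). An Euler–Gauss sequence is an integer sequence with $A_n^+\equiv A_n^-\pmod n$ for all $n\ge1$. A Gauss sequence is an integer sequence with $\sum_{d\mid n}\mu(d)a_{n/d}\equiv0\pmod n$ for all $n\ge1$. *)

theory Defs
  imports "HOL-Computational_Algebra.Computational_Algebra" "HOL-Number_Theory.Number_Theory"
begin

definition moebius_mu :: "nat \<Rightarrow> int" where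
  "moebius_mu d = (if d = 0 then 0
                   else if squarefree d then (-1) ^ card (prime_factors d) else 0)"

definition A_plus :: "(nat \<Rightarrow> int) \<Rightarrow> nat \<Rightarrow> int" where
  "A_plus a n = (\<Prod>d \<in> {d. d dvd n \<and> moebius_mu d = 1}. a (n div d))"

definition A_minus :: "(nat \<Rightarrow> int) \<Rightarrow> nat \<Rightarrow> int" where
  "A_minus a n = (\<Prod>d \<in> {d. d dvd n \<and> moebius_mu d = -1}. a (n div d))"

text \<open>Sequences are indexed by positive naturals; the value at 0 is ignored.\<close>
definition euler_gauss_seq :: "(nat \<Rightarrow> int) \<Rightarrow> bool" where
  "euler_gauss_seq a \<longleftrightarrow> (\<forall>n\<ge>1. [A_plus a n = A_minus a n] (mod int n))"

definition gauss_seq :: "(nat \<Rightarrow> int) \<Rightarrow> bool" where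
  "gauss_seq a \<longleftrightarrow> (\<forall>n\<ge>1. (\<Sum>d | d dvd n. moebius_mu d * a (n div d)) mod int n = 0)"

end

theory Submission
  imports Defs
begin

(* Fix a prime p and write n = p^k m with k >= 1 and p not dividing m. The squarefree divisors
   of n are the squarefree divisors d of m together with the p d, and mu(p d) = -mu(d). Hence
   A_n^+ and A_n^- are products over d | m of the factors a(p^k m/d) and a(p^(k-1) m/d) with
   the roles of mu(d) = 1 and mu(d) = -1 exchanged, and the Gauss sum at n is
   sum_{d | m} mu(d) (a(p^k m/d) - a(p^(k-1) m/d)).
   Strong induction on m gives a(p^k m) = a(p^(k-1) m) (mod p^k): for d <> 1 the two factors
   are congruent by induction and prime to p (by gcd(a_j, j) = 1, and for a(m/d) itself via
   a(p m/d) = a(m/d) mod p), so they cancel from A_n^+ = A_n^- (mod p^k), leaving the d = 1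
   factors. Thus every prime power dividing n divides the Gauss sum at n. *)

lemma moebius_mu_1 [simp]: "moebius_mu 1 = 1" "moebius_mu (Suc 0) = 1"
  by (simp_all add: moebius_mu_def)

lemma moebius_mu_cases: "moebius_mu d = 0 \<or> moebius_mu d = 1 \<or> moebius_mu d = -1"
  by (simp add: moebius_mu_def minus_one_power_iff)

lemma squarefree_if_moebius_mu_nonzero: "moebius_mu d \<noteq> 0 \<Longrightarrow> squarefree d"
  by (simp add: moebius_mu_def split: if_splits)

lemma moebius_mu_prime_mult:
  assumes "prime p" and "\<not> p dvd d"
  shows "moebius_mu (p * d) = - moebius_mu d"
proof -
  have "d \<noteq> 0" and "p \<noteq> 0"
    using assms by (metis dvd_0_right, auto)
  have "squarefree (p * d) \<longleftrightarrow> squarefree d"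
    using squarefree_multD(2)[of p d] squarefree_prime[OF assms(1)]
      squarefree_mult_coprime[OF prime_imp_coprime[OF assms]] by blast
  moreover have "prime_factors (p * d) = insert p (prime_factors d)"
    using prime_factors_product[OF \<open>p \<noteq> 0\<close> \<open>d \<noteq> 0\<close>] prime_prime_factors[OF assms(1)] by simp
  moreover have "p \<notin> prime_factors d"
    using assms(2) by (auto simp: in_prime_factors_iff)
  ultimately show ?thesis
    using \<open>d \<noteq> 0\<close> \<open>p \<noteq> 0\<close> by (simp add: moebius_mu_def)
qed

definition moebius_divisors :: "int \<Rightarrow> nat \<Rightarrow> nat set" where
  "moebius_divisors c n = {d. d dvd n \<and> moebius_mu d = c}"

lemma finite_moebius_divisors: "n \<noteq> 0 \<Longrightarrow> finite (moebius_divisors c n)"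
  unfolding moebius_divisors_def by (rule finite_subset[of _ "{d. d dvd n}"]) auto

lemma sum_divisors_moebius_mu:
  fixes g :: "nat \<Rightarrow> int"
  assumes "n \<noteq> 0"
  shows "(\<Sum>d | d dvd n. moebius_mu d * g d) =
         sum g (moebius_divisors 1 n) - sum g (moebius_divisors (-1) n)"
proof -
  let ?h = "\<lambda>d. moebius_mu d * g d"
  have "(\<Sum>d | d dvd n. ?h d) = sum ?h (moebius_divisors 1 n \<union> moebius_divisors (-1) n)"
    using assms by (intro sum.mono_neutral_right) (use moebius_mu_cases in \<open>auto simp: moebius_divisors_def\<close>)
  also have "\<dots> = sum ?h (moebius_divisors 1 n) + sum ?h (moebius_divisors (-1) n)"
    using assms by (intro sum.union_disjoint) (auto simp: finite_moebius_divisors moebius_divisors_def)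
  also have "\<dots> = sum g (moebius_divisors 1 n) - sum g (moebius_divisors (-1) n)"
    by (simp add: moebius_divisors_def sum_negf)
  finally show ?thesis .
qed

lemma dvd_prime_power_mult_imp_dvd:
  fixes p :: nat
  assumes "prime p" and "\<not> p dvd d" and "d dvd p ^ k * m"
  shows "d dvd m"
proof -
  have "coprime d (p ^ k)"
    using prime_imp_coprime[OF assms(1,2)] by (simp add: coprime_commute)
  then show ?thesis
    using assms(3) by (simp add: coprime_dvd_mult_right_iff)
qed

lemma moebius_divisors_prime_power_mult_decomp:
  assumes p: "prime p" and "\<not> p dvd m" and "k \<ge> 1" and "c \<noteq> 0"
  shows "moebius_divisors c (p ^ k * m) = moebius_divisors c m \<union> (*) p ` moebius_divisors (-c) m"
proof (intro equalityI subsetI)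
  fix d assume "d \<in> moebius_divisors c (p ^ k * m)"
  then have d: "d dvd p ^ k * m" "moebius_mu d = c"
    by (auto simp: moebius_divisors_def)
  show "d \<in> moebius_divisors c m \<union> (*) p ` moebius_divisors (-c) m"
  proof (cases "p dvd d")
    case True
    then obtain e where e: "d = p * e" by blast
    have "\<not> p dvd e"
    proof
      assume "p dvd e"
      then have "p ^ 2 dvd d"
        using e by (simp add: power2_eq_square mult_dvd_mono)
      moreover have "squarefree d"
        using d(2) \<open>c \<noteq> 0\<close> by (simp add: squarefree_if_moebius_mu_nonzero)
      ultimately show False
        using p squarefreeD by (metis not_prime_unit)
    qed
    obtain j where "k = Suc j"
      using \<open>k \<ge> 1\<close> by (cases k) auto
    then have "e dvd p ^ j * m"
      using d(1) e p by (simp add: mult.assoc prime_gt_0_nat)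
    with p \<open>\<not> p dvd e\<close> have "e dvd m"
      by (rule dvd_prime_power_mult_imp_dvd)
    moreover have "moebius_mu e = -c"
      using d(2) e moebius_mu_prime_mult[OF p \<open>\<not> p dvd e\<close>] by simp
    ultimately show ?thesis
      using e by (auto simp: moebius_divisors_def)
  next
    case False
    have "d dvd m"
      using p False d(1) by (rule dvd_prime_power_mult_imp_dvd)
    then show ?thesis
      using d(2) by (simp add: moebius_divisors_def)
  qed
next
  fix d assume "d \<in> moebius_divisors c m \<union> (*) p ` moebius_divisors (-c) m"
  then consider "d dvd m" "moebius_mu d = c" | e where "d = p * e" "e dvd m" "moebius_mu e = -c"
    by (auto simp: moebius_divisors_def)
  then show "d \<in> moebius_divisors c (p ^ k * m)"
  proof cases
    case 1
    then show ?thesis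
      by (simp add: moebius_divisors_def)
  next
    case 2
    have "\<not> p dvd e"
      using \<open>e dvd m\<close> \<open>\<not> p dvd m\<close> dvd_trans by blast
    have "p dvd p ^ k"
      using \<open>k \<ge> 1\<close> by (simp add: dvd_power)
    then have "d dvd p ^ k * m"
      using \<open>d = p * e\<close> \<open>e dvd m\<close> by (simp add: mult_dvd_mono)
    then show ?thesis
      using 2 moebius_mu_prime_mult[OF p \<open>\<not> p dvd e\<close>] by (simp add: moebius_divisors_def)
  qed
qed

lemma (in comm_monoid_set) moebius_divisors_prime_power_mult:
  assumes p: "prime p" and "\<not> p dvd m" and "k \<ge> 1" and "c \<noteq> 0"
  shows "F (\<lambda>d. g (p ^ k * m div d)) (moebius_divisors c (p ^ k * m)) =
         F (\<lambda>d. g (p ^ k * (m div d))) (moebius_divisors c m) \<^bold>*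
         F (\<lambda>d. g (p ^ (k - 1) * (m div d))) (moebius_divisors (-c) m)"
proof -
  have "m \<noteq> 0"
    using \<open>\<not> p dvd m\<close> by (metis dvd_0_right)
  have quotients: "p ^ k * m div d = p ^ k * (m div d)" "p ^ k * m div (p * d) = p ^ (k - 1) * (m div d)"
    if "d dvd m" for d
  proof -
    have "p ^ k = p * p ^ (k - 1)"
      using \<open>k \<ge> 1\<close> by (simp add: power_eq_if)
    then show "p ^ k * m div (p * d) = p ^ (k - 1) * (m div d)"
      using p that by (simp add: prime_gt_0_nat mult.assoc div_mult_swap)
  qed (use that in \<open>simp add: div_mult_swap\<close>)
  have "inj_on ((*) p) A" for A
    using p by (auto simp: inj_on_def prime_gt_0_nat)
  moreover have "moebius_divisors c m \<inter> (*) p ` moebius_divisors (-c) m = {}"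
    using \<open>\<not> p dvd m\<close> by (auto simp: moebius_divisors_def dest: dvd_mult_left)
  ultimately have "F (\<lambda>d. g (p ^ k * m div d)) (moebius_divisors c (p ^ k * m)) =
      F (\<lambda>d. g (p ^ k * m div d)) (moebius_divisors c m) \<^bold>*
      F (\<lambda>d. g (p ^ k * m div (p * d))) (moebius_divisors (-c) m)"
    unfolding moebius_divisors_prime_power_mult_decomp[OF assms]
    using \<open>m \<noteq> 0\<close> by (simp add: union_disjoint finite_moebius_divisors reindex)
  also have "\<dots> = F (\<lambda>d. g (p ^ k * (m div d))) (moebius_divisors c m) \<^bold>*
         F (\<lambda>d. g (p ^ (k - 1) * (m div d))) (moebius_divisors (-c) m)"
    by (intro arg_cong2[where f = "(\<^bold>*)"] cong) (auto simp: moebius_divisors_def quotients)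
  finally show ?thesis .
qed

lemma cong_cancel_prod:
  fixes X Y :: "'a \<Rightarrow> 'b :: {unique_euclidean_ring, ring_gcd}"
  assumes "finite P" and "finite M" and "i \<in> P" and "i \<notin> M"
    and "\<And>j. j \<in> P \<union> M \<Longrightarrow> j \<noteq> i \<Longrightarrow> [X j = Y j] (mod q)"
    and "\<And>j. j \<in> P \<union> M \<Longrightarrow> j \<noteq> i \<Longrightarrow> coprime (Y j) q"
    and "[prod X P * prod Y M = prod X M * prod Y P] (mod q)"
  shows "[X i = Y i] (mod q)"
proof -
  define R where "R = prod Y (P - {i}) * prod Y M"
  have "[prod X (P - {i}) = prod Y (P - {i})] (mod q)" and "[prod X M = prod Y M] (mod q)"
    using assms(4,5) by (auto intro!: cong_prod)
  then have "[prod X P * prod Y M = X i * R] (mod q)" and "[prod X M * prod Y P = Y i * R] (mod q)"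
    unfolding R_def prod.remove[OF assms(1,3)]
    by (auto intro!: cong_mult cong_refl simp: ac_simps)
  with assms(7) have "[X i * R = Y i * R] (mod q)"
    by (meson cong_sym cong_trans)
  moreover have "coprime R q"
    using assms(4,6) by (auto simp: R_def intro!: prod_coprime_left)
  ultimately show ?thesis
    by (simp add: cong_mult_rcancel)
qed

context
  fixes a :: "nat \<Rightarrow> int"
  assumes euler_gauss: "euler_gauss_seq a"
    and coprime_index: "\<forall>n\<ge>1. gcd (a n) (int n) = 1"
begin

lemma coprime_prime_power_mult:
  assumes "prime p" and "\<not> p dvd m" and "[a (p * m) = a m] (mod int p)"
  shows "coprime (a (p ^ j * m)) (int p)"
proof -
  have "m \<noteq> 0" and "p \<noteq> 0"
    using assms by (metis dvd_0_right, auto)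
  have coprime_multiple: "coprime (a (p ^ i * m)) (int p)" if "i \<ge> 1" for i
  proof -
    have "coprime (a (p ^ i * m)) (int p ^ i * int m)"
      using coprime_index[rule_format, of "p ^ i * m"] \<open>m \<noteq> 0\<close> \<open>p \<noteq> 0\<close>
      by (simp add: coprime_iff_gcd_eq_1)
    then show ?thesis
      using that by simp
  qed
  show ?thesis
  proof (cases "j = 0")
    case True
    then show ?thesis
      using coprime_multiple[of 1] cong_imp_coprime[OF assms(3)] by simp
  qed (simp add: coprime_multiple)
qed

lemma prime_power_mult_cong:
  assumes p: "prime p" and "\<not> p dvd m" and "k \<ge> 1"
  shows "[a (p ^ k * m) = a (p ^ (k - 1) * m)] (mod int p ^ k)"
  using assms(2,3)
proof (induction m arbitrary: k rule: less_induct)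
  case (less m)
  define X where "X d = a (p ^ k * (m div d))" for d
  define Y where "Y d = a (p ^ (k - 1) * (m div d))" for d
  define P where "P = moebius_divisors 1 m"
  define M where "M = moebius_divisors (-1) m"
  have "m \<noteq> 0" and "p \<noteq> 0"
    using less.prems p by (metis dvd_0_right, auto)
  have smaller: "[X d = Y d] (mod int p ^ k) \<and> coprime (Y d) (int p)"
    if "d dvd m" and "d \<noteq> 1" for d
  proof -
    have "d \<noteq> 0"
      using that \<open>m \<noteq> 0\<close> by (metis dvd_0_left)
    then have "m div d < m"
      using that \<open>m \<noteq> 0\<close> by (intro div_less_dividend) simp_all
    moreover have "m div d dvd m"
      using that(1) by (metis dvd_div_mult_self dvd_triv_left)
    then have "\<not> p dvd m div d"
      using less.prems(1) dvd_trans by blast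
    ultimately have "[X d = Y d] (mod int p ^ k)" and "[a (p * (m div d)) = a (m div d)] (mod int p)"
      using less.IH[of "m div d" k] less.IH[of "m div d" 1] less.prems(2) by (simp_all add: X_def Y_def)
    then show ?thesis
      using coprime_prime_power_mult[OF p \<open>\<not> p dvd m div d\<close>] by (simp add: Y_def)
  qed
  have "p ^ k * m \<ge> 1"
    using \<open>m \<noteq> 0\<close> \<open>p \<noteq> 0\<close> by simp
  then have "[A_plus a (p ^ k * m) = A_minus a (p ^ k * m)] (mod int (p ^ k * m))"
    using euler_gauss unfolding euler_gauss_seq_def by blast
  then have "[A_plus a (p ^ k * m) = A_minus a (p ^ k * m)] (mod int p ^ k)"
    by (rule cong_dvd_modulus) simp
  moreover have "A_plus a (p ^ k * m) = prod X P * prod Y M"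
    and "A_minus a (p ^ k * m) = prod X M * prod Y P"
    unfolding A_plus_def A_minus_def moebius_divisors_def[symmetric] X_def Y_def P_def M_def
    using prod.moebius_divisors_prime_power_mult[OF p less.prems, of 1 a]
      prod.moebius_divisors_prime_power_mult[OF p less.prems, of "-1" a] by simp_all
  ultimately have prod_cong: "[prod X P * prod Y M = prod X M * prod Y P] (mod int p ^ k)"
    by simp
  have "[X 1 = Y 1] (mod int p ^ k)"
    by (rule cong_cancel_prod[OF _ _ _ _ _ _ prod_cong])
       (use smaller \<open>m \<noteq> 0\<close> in \<open>auto simp: finite_moebius_divisors moebius_divisors_def P_def M_def\<close>)
  then show ?case
    by (simp add: X_def Y_def)
qed

lemma gauss_sum_prime_power_dvd:
  assumes p: "prime p" and "n \<noteq> 0" and "p ^ k dvd n"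
  shows "int p ^ k dvd (\<Sum>d | d dvd n. moebius_mu d * a (n div d))"
proof -
  define e where "e = multiplicity p n"
  have "\<not> is_unit p"
    using p by auto
  then obtain m where n: "n = p ^ e * m" and "\<not> p dvd m"
    using multiplicity_decompose' \<open>n \<noteq> 0\<close> unfolding e_def by metis
  have "k \<le> e"
    unfolding e_def using multiplicity_geI \<open>n \<noteq> 0\<close> \<open>\<not> is_unit p\<close> assms(3) by blast
  show ?thesis
  proof (cases "e = 0")
    case False
    define D where "D d = a (p ^ e * (m div d)) - a (p ^ (e - 1) * (m div d))" for d
    have "(\<Sum>d | d dvd n. moebius_mu d * a (n div d)) =
          sum (\<lambda>d. a (n div d)) (moebius_divisors 1 n) - sum (\<lambda>d. a (n div d)) (moebius_divisors (-1) n)"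
      by (rule sum_divisors_moebius_mu[OF \<open>n \<noteq> 0\<close>])
    also have "\<dots> = sum D (moebius_divisors 1 m) - sum D (moebius_divisors (-1) m)"
      unfolding n using False
        sum.moebius_divisors_prime_power_mult[OF p \<open>\<not> p dvd m\<close>, of e 1 a]
        sum.moebius_divisors_prime_power_mult[OF p \<open>\<not> p dvd m\<close>, of e "-1" a]
      by (simp add: D_def sum_subtractf)
    finally have sum_eq: "(\<Sum>d | d dvd n. moebius_mu d * a (n div d)) =
          sum D (moebius_divisors 1 m) - sum D (moebius_divisors (-1) m)" .
    moreover have "int p ^ e dvd D d" if "d dvd m" for d
    proof -
      have "m div d dvd m"
        using that by (metis dvd_div_mult_self dvd_triv_left)
      then have "\<not> p dvd m div d"
        using \<open>\<not> p dvd m\<close> dvd_trans by blast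
      then show ?thesis
        using prime_power_mult_cong[OF p, of "m div d" e] False
        by (simp add: D_def cong_iff_dvd_diff)
    qed
    then have "int p ^ e dvd (\<Sum>d | d dvd n. moebius_mu d * a (n div d))"
      unfolding sum_eq by (auto intro!: dvd_diff dvd_sum simp: moebius_divisors_def)
    then show ?thesis
      using \<open>k \<le> e\<close> by (meson dvd_trans le_imp_power_dvd)
  qed (use \<open>k \<le> e\<close> in simp)
qed

end

lemma prime_power_dvd_imp_dvd:
  fixes n x :: "'a :: factorial_semiring"
  assumes "n \<noteq> 0" and "\<And>p k. prime p \<Longrightarrow> p ^ k dvd n \<Longrightarrow> p ^ k dvd x"
  shows "n dvd x"
proof (cases "x = 0")
  case False
  show ?thesis
  proof (rule multiplicity_le_imp_dvd[OF \<open>n \<noteq> 0\<close>])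
    fix p :: 'a assume "prime p"
    then have "\<not> is_unit p"
      using not_prime_unit by blast
    moreover have "p ^ multiplicity p n dvd x"
      using assms(2)[OF \<open>prime p\<close> multiplicity_dvd] .
    ultimately show "multiplicity p n \<le> multiplicity p x"
      by (rule multiplicity_geI[OF False])
  qed
qed simp

lemma int_dvd_if_prime_power_dvd:
  assumes "n \<noteq> 0" and "\<And>p k. prime p \<Longrightarrow> p ^ k dvd n \<Longrightarrow> int p ^ k dvd x"
  shows "int n dvd x"
proof (rule prime_power_dvd_imp_dvd)
  fix q :: int and k assume "prime q" and "q ^ k dvd int n"
  obtain p where q: "q = int p"
    using prime_ge_0_int[OF \<open>prime q\<close>] nonneg_int_cases by blast
  have "prime p" and "p ^ k dvd n"
    using \<open>prime q\<close> \<open>q ^ k dvd int n\<close> unfolding q by (simp_all flip: of_nat_power)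
  then show "q ^ k dvd x"
    unfolding q by (rule assms(2))
qed (use assms(1) in simp)

theorem theorem3:
  fixes a :: "nat \<Rightarrow> int"
  assumes "euler_gauss_seq a"
    and "\<forall>n\<ge>1. gcd (a n) (int n) = 1"
  shows "gauss_seq a"
  unfolding gauss_seq_def
proof (intro allI impI)
  fix n :: nat assume "n \<ge> 1"
  have "int n dvd (\<Sum>d | d dvd n. moebius_mu d * a (n div d))"
    by (rule int_dvd_if_prime_power_dvd) (use \<open>n \<ge> 1\<close> gauss_sum_prime_power_dvd[OF assms] in auto)
  then show "(\<Sum>d | d dvd n. moebius_mu d * a (n div d)) mod int n = 0"
    by simp
qed

end
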